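(* Let $B$ be a $\Sigma$-ring containing a $\Sigma$-pseudofield $L$ as a $\Sigma$-subring such that $C_L:=L^\sigma$ is a $\Sigma_1$-closed pseudofield. Let $C\subseteq B^\sigma$ be a $\Sigma_1$-stable subring with $C_L\subseteq C$. Then the natural $\Sigma$-homomorphism $L\otimes_{C_L}C\to B$, $l\otimes c\mapsto lc$, is injective, so that $L\cdot C\cong L\otimes_{C_L}C$, where $L\cdot C$ is the subring of $B$ generated by $L$ and $C$.
   Context: All rings are commutative with $1$. Fix $\Sigma_0=\mathbb Z$ with generator $\sigma$, a finite abelian group $\Sigma_1=\mathbb Z/t_1\mathbb Z\oplus\dots\oplus\mathbb Z/t_s\mathbb Z$ ($t_i\ge2$), and $\Sigma=\Sigma_0\oplus\Sigma_1$. For a subgroup $\Sigma'\subseteq\Sigma$, a $\Sigma'$-ring is a ring with an action of $\Sigma'$ by ring automorphisms; $\Sigma'$-ideals are $\Sigma'$-stable ideals; $R^\sigma$ denotes the $\sigma$-invariants. A $\Sigma'$-ring is $\Sigma'$-simple if its only $\Sigma'$-ideals are $0$ and itself ($\neq0$). A ring is absolutely flat if every module over it is flat. A $\Sigma'$-pseudofield is an absolutely flat $\Sigma'$-simple ring. $C\{y_1,\dots,y_n\}_{\Sigma_1}$ is the polynomial ring over $C$ in indeterminates $\tau y_i$ ($\tau\in\Sigma_1$) with natural $\Sigma_1$-action; $\mathbb V(E)$ is the common zero set in $C^n$ and $\mathbb I(X)$ the ideal of polynomials vanishing on $X$. A $\Sigma_1$-pseudofield $C$ is $\Sigma_1$-closed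 if $\sqrt I=\mathbb I(\mathbb V(I))$ for every $n$ and every $\Sigma_1$-ideal $I\subseteq C\{y_1,\dots,y_n\}_{\Sigma_1}$. The $\Sigma$-action on $L\otimes_{C_L}C$ is the diagonal one. *)

theory Defs
  imports Main "HOL-Library.Poly_Mapping" "HOL-Library.Product_Plus"
begin

definition is_subring :: "'b::comm_ring_1 set \<Rightarrow> bool" where
  "is_subring R \<longleftrightarrow> 0 \<in> R \<and> 1 \<in> R \<and> (\<forall>x\<in>R. \<forall>y\<in>R. x + y \<in> R \<and> x * y \<in> R \<and> - x \<in> R)"

definition is_ideal_in :: "'b::comm_ring_1 set \<Rightarrow> 'b set \<Rightarrow> bool" where
  "is_ideal_in R J \<longleftrightarrow> J \<subseteq> R \<and> 0 \<in> J \<and> (\<forall>x\<in>J. \<forall>y\<in>J. x + y \<in> J)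
      \<and> (\<forall>r\<in>R. \<forall>x\<in>J. r * x \<in> J)"

definition ring_action :: "('g::ab_group_add \<Rightarrow> 'b::comm_ring_1 \<Rightarrow> 'b) \<Rightarrow> bool" where
  "ring_action act \<longleftrightarrow> (\<forall>x. act 0 x = x) \<and> (\<forall>g h x. act (g + h) x = act g (act h x))
     \<and> (\<forall>g. act g 1 = 1 \<and> (\<forall>x y. act g (x + y) = act g x + act g y \<and> act g (x * y) = act g x * act g y))"

definition stable :: "('g \<Rightarrow> 'b \<Rightarrow> 'b) \<Rightarrow> 'g set \<Rightarrow> 'b set \<Rightarrow> bool" where
  "stable act S R \<longleftrightarrow> (\<forall>g\<in>S. \<forall>x\<in>R. act g x \<in> R)"

definition act_simple :: "('g \<Rightarrow> 'b::comm_ring_1 \<Rightarrow> 'b) \<Rightarrow> 'g set \<Rightarrow> 'b set \<Rightarrow> bool" where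
  "act_simple act S R \<longleftrightarrow> R \<noteq> {0} \<and>
     (\<forall>J. is_ideal_in R J \<and> stable act S J \<longrightarrow> J = {0} \<or> J = R)"

text \<open>Absolutely flat commutative ring, via the von Neumann regularity characterisation.\<close>
definition abs_flat :: "'b::comm_ring_1 set \<Rightarrow> bool" where
  "abs_flat R \<longleftrightarrow> (\<forall>a\<in>R. \<exists>x\<in>R. a = a * a * x)"

definition pseudofield :: "('g \<Rightarrow> 'b::comm_ring_1 \<Rightarrow> 'b) \<Rightarrow> 'g set \<Rightarrow> 'b set \<Rightarrow> bool" where
  "pseudofield act S R \<longleftrightarrow> is_subring R \<and> stable act S R \<and> abs_flat R \<and> act_simple act S R"

section \<open>Sigma = Z (+) Sigma1, with Sigma1 = 'g a finite abelian group\<close>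

definition Sigma1 :: "(int \<times> 'g::ab_group_add) set" where
  "Sigma1 = {(0, t) | t. True}"

definition sigma :: "int \<times> 'g::ab_group_add" where
  "sigma = (1, 0)"

definition invariants :: "(int \<times> 'g::ab_group_add \<Rightarrow> 'b \<Rightarrow> 'b) \<Rightarrow> 'b set \<Rightarrow> 'b set" where
  "invariants act R = {x \<in> R. act sigma x = x}"

text \<open>Indeterminates are (tau, i) standing for tau y_i; monomials are finitely supported
  exponent maps, polynomials finitely supported coefficient maps.\<close>
type_synonym ('g, 'b) spoly = "(('g \<times> nat) \<Rightarrow>\<^sub>0 nat) \<Rightarrow>\<^sub>0 'b"

definition spoly_ring :: "'b::comm_ring_1 set \<Rightarrow> nat \<Rightarrow> ('g, 'b) spoly set" where
  "spoly_ring C n = {p. (\<forall>m\<in>Poly_Mapping.keys p. Poly_Mapping.lookup p m \<in> C \<and> (\<forall>v\<in>Poly_Mapping.keys m. snd v < n))}"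

definition shift_mon :: "'g::ab_group_add \<Rightarrow> (('g \<times> nat) \<Rightarrow>\<^sub>0 nat) \<Rightarrow> (('g \<times> nat) \<Rightarrow>\<^sub>0 nat)" where
  "shift_mon t m = Poly_Mapping.map_key (\<lambda>(a, i). (a - t, i)) m"

text \<open>natural Sigma1-action: tau acts on coefficients, and sends tau' y_i to (tau+tau') y_i\<close>
definition spoly_act :: "(int \<times> 'g::ab_group_add \<Rightarrow> 'b::comm_ring_1 \<Rightarrow> 'b) \<Rightarrow> 'g \<Rightarrow> ('g, 'b) spoly \<Rightarrow> ('g, 'b) spoly" where
  "spoly_act act t p = Poly_Mapping.map (act (0, t)) (Poly_Mapping.map_key (shift_mon (- t)) p)"

definition spoly_eval :: "(int \<times> 'g::ab_group_add \<Rightarrow> 'b::comm_ring_1 \<Rightarrow> 'b) \<Rightarrow> (nat \<Rightarrow> 'b) \<Rightarrow> ('g, 'b) spoly \<Rightarrow> 'b" where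
  "spoly_eval act a p = (\<Sum>m\<in>Poly_Mapping.keys p. Poly_Mapping.lookup p m * (\<Prod>v\<in>Poly_Mapping.keys m. act (0, fst v) (a (snd v)) ^ Poly_Mapping.lookup m v))"

definition points :: "'b::zero set \<Rightarrow> nat \<Rightarrow> (nat \<Rightarrow> 'b) set" where
  "points C n = {a. (\<forall>i<n. a i \<in> C) \<and> (\<forall>i\<ge>n. a i = 0)}"

definition zero_set :: "(int \<times> 'g::ab_group_add \<Rightarrow> 'b::comm_ring_1 \<Rightarrow> 'b) \<Rightarrow> 'b set \<Rightarrow> nat \<Rightarrow> ('g, 'b) spoly set \<Rightarrow> (nat \<Rightarrow> 'b) set" where
  "zero_set act C n E = {a \<in> points C n. \<forall>f\<in>E. spoly_eval act a f = 0}"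

definition vanishing_ideal :: "(int \<times> 'g::ab_group_add \<Rightarrow> 'b::comm_ring_1 \<Rightarrow> 'b) \<Rightarrow> 'b set \<Rightarrow> nat \<Rightarrow> (nat \<Rightarrow> 'b) set \<Rightarrow> ('g, 'b) spoly set" where
  "vanishing_ideal act C n X = {f \<in> spoly_ring C n. \<forall>a\<in>X. spoly_eval act a f = 0}"

definition radical_in :: "('g, 'b::comm_ring_1) spoly set \<Rightarrow> ('g, 'b) spoly set \<Rightarrow> ('g, 'b) spoly set" where
  "radical_in R I = {f \<in> R. \<exists>k. f ^ k \<in> I}"

definition Sigma1_ideal :: "(int \<times> 'g::ab_group_add \<Rightarrow> 'b::comm_ring_1 \<Rightarrow> 'b) \<Rightarrow> 'b set \<Rightarrow> nat \<Rightarrow> ('g, 'b) spoly set \<Rightarrow> bool" where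
  "Sigma1_ideal act C n I \<longleftrightarrow> is_ideal_in (spoly_ring C n) I \<and> (\<forall>t. \<forall>f\<in>I. spoly_act act t f \<in> I)"

definition Sigma1_closed :: "(int \<times> 'g::ab_group_add \<Rightarrow> 'b::comm_ring_1 \<Rightarrow> 'b) \<Rightarrow> 'b set \<Rightarrow> bool" where
  "Sigma1_closed act C \<longleftrightarrow> pseudofield act Sigma1 C \<and>
     (\<forall>n I. Sigma1_ideal act C n I \<longrightarrow>
        radical_in (spoly_ring C n) I = vanishing_ideal act C n (zero_set act C n I))"

section \<open>Tensor product L \<otimes>_{C_L} C as free abelian group on L \<times> C modulo relations\<close>

inductive_set tensor_rel :: "'b::comm_ring_1 set \<Rightarrow> 'b set \<Rightarrow> 'b set \<Rightarrow> (('b \<times> 'b) \<Rightarrow>\<^sub>0 int) set"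
  for L K C where
  zero: "0 \<in> tensor_rel L K C"
| add: "x \<in> tensor_rel L K C \<Longrightarrow> y \<in> tensor_rel L K C \<Longrightarrow> x + y \<in> tensor_rel L K C"
| neg: "x \<in> tensor_rel L K C \<Longrightarrow> - x \<in> tensor_rel L K C"
| add_left: "l \<in> L \<Longrightarrow> l' \<in> L \<Longrightarrow> c \<in> C \<Longrightarrow>
     frag_of (l + l', c) - frag_of (l, c) - frag_of (l', c) \<in> tensor_rel L K C"
| add_right: "l \<in> L \<Longrightarrow> c \<in> C \<Longrightarrow> c' \<in> C \<Longrightarrow>
     frag_of (l, c + c') - frag_of (l, c) - frag_of (l, c') \<in> tensor_rel L K C"
| scalar: "l \<in> L \<Longrightarrow> c \<in> C \<Longrightarrow> k \<in> K \<Longrightarrow>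
     frag_of (l * k, c) - frag_of (l, k * c) \<in> tensor_rel L K C"

text \<open>formal sums with support in L \<times> C, i.e. representatives of elements of the tensor product\<close>
definition tensor_reps :: "'b::zero set \<Rightarrow> 'b set \<Rightarrow> (('b \<times> 'b) \<Rightarrow>\<^sub>0 int) set" where
  "tensor_reps L C = {x. Poly_Mapping.keys x \<subseteq> L \<times> C}"

definition mult_map :: "(('b::comm_ring_1 \<times> 'b) \<Rightarrow>\<^sub>0 int) \<Rightarrow> 'b" where
  "mult_map x = (\<Sum>p\<in>Poly_Mapping.keys x. of_int (Poly_Mapping.lookup x p) * fst p * snd p)"

definition tensor_mult_injective :: "'b::comm_ring_1 set \<Rightarrow> 'b set \<Rightarrow> 'b set \<Rightarrow> bool" where
  "tensor_mult_injective L K C \<longleftrightarrow>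
     (\<forall>x\<in>tensor_reps L C. mult_map x = 0 \<longrightarrow> x \<in> tensor_rel L K C)"

end

theory Submission
  imports Defs
begin

text \<open>Since \<open>\<Sigma>\<^sub>1\<close> is finite, a maximal \<open>\<sigma>\<close>-ideal of \<open>L\<close> has finitely many \<open>\<Sigma>\<^sub>1\<close>-translates;
  they are pairwise comaximal and meet in a proper \<open>\<Sigma>\<close>-ideal, i.e. in \<open>0\<close>. By the Chinese
  remainder theorem \<open>L\<close> is therefore a finite product of rings \<open>e L\<close> with \<open>\<sigma>\<close>-fixed
  idempotents \<open>e\<close>, each \<open>\<sigma>\<close>-simple. For a \<open>\<sigma>\<close>-simple ring the classical argument applies:
  among the relations \<open>\<Sum> l\<^sub>i c\<^sub>i = 0\<close> with \<open>c\<^sub>i \<in> C\<close>, one normalised to \<open>e\<close> at some index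
  is unique up to relations on fewer indices, hence \<open>\<sigma>\<close>-invariant, i.e. has coefficients in
  \<open>C\<^sub>L\<close>; subtracting multiples of it shortens any relation, so every relation already
  holds in \<open>L \<otimes>\<^bsub>C\<^sub>L\<^esub> C\<close>.\<close>

lemma subring_zero: "is_subring R \<Longrightarrow> 0 \<in> R"
  and subring_one: "is_subring R \<Longrightarrow> 1 \<in> R"
  and subring_add: "is_subring R \<Longrightarrow> x \<in> R \<Longrightarrow> y \<in> R \<Longrightarrow> x + y \<in> R"
  and subring_mult: "is_subring R \<Longrightarrow> x \<in> R \<Longrightarrow> y \<in> R \<Longrightarrow> x * y \<in> R"
  and subring_uminus: "is_subring R \<Longrightarrow> x \<in> R \<Longrightarrow> - x \<in> R"
  by (simp_all add: is_subring_def)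

lemma subring_diff: "is_subring R \<Longrightarrow> x \<in> R \<Longrightarrow> y \<in> R \<Longrightarrow> x - y \<in> R"
  using subring_add[of R x "- y"] subring_uminus[of R y] by simp

lemma subring_sum: "is_subring R \<Longrightarrow> (\<And>i. i \<in> A \<Longrightarrow> f i \<in> R) \<Longrightarrow> sum f A \<in> R"
  by (induction A rule: infinite_finite_induct) (auto intro: subring_zero subring_add)

lemma subring_prod: "is_subring R \<Longrightarrow> (\<And>i. i \<in> A \<Longrightarrow> f i \<in> R) \<Longrightarrow> prod f A \<in> R"
  by (induction A rule: infinite_finite_induct) (auto intro: subring_one subring_mult)

lemma subring_of_int: "is_subring R \<Longrightarrow> of_int n \<in> R"
  by (induction n rule: int_induct[where k = 0]) (auto intro: subring_zero subring_add subring_diff subring_one)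

lemma ideal_subset: "is_ideal_in R I \<Longrightarrow> x \<in> I \<Longrightarrow> x \<in> R"
  and ideal_zero: "is_ideal_in R I \<Longrightarrow> 0 \<in> I"
  and ideal_add: "is_ideal_in R I \<Longrightarrow> x \<in> I \<Longrightarrow> y \<in> I \<Longrightarrow> x + y \<in> I"
  and ideal_mult_left: "is_ideal_in R I \<Longrightarrow> r \<in> R \<Longrightarrow> x \<in> I \<Longrightarrow> r * x \<in> I"
  by (auto simp: is_ideal_in_def)

lemma ideal_mult_right: "is_ideal_in R I \<Longrightarrow> r \<in> R \<Longrightarrow> x \<in> I \<Longrightarrow> x * r \<in> I"
  using ideal_mult_left[of R I r x] by (simp add: mult.commute)

lemma ideal_uminus: "is_subring R \<Longrightarrow> is_ideal_in R I \<Longrightarrow> x \<in> I \<Longrightarrow> - x \<in> I"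
  using ideal_mult_left[of R I "- 1" x] subring_uminus[OF _ subring_one, of R] by simp

lemma ideal_diff: "is_subring R \<Longrightarrow> is_ideal_in R I \<Longrightarrow> x \<in> I \<Longrightarrow> y \<in> I \<Longrightarrow> x - y \<in> I"
  using ideal_add[of R I x "- y"] ideal_uminus[of R I y] by simp

lemma ideal_sum: "is_ideal_in R I \<Longrightarrow> (\<And>i. i \<in> A \<Longrightarrow> f i \<in> I) \<Longrightarrow> sum f A \<in> I"
  by (induction A rule: infinite_finite_induct) (auto intro: ideal_zero ideal_add)

lemma ideal_prod:
  assumes "is_subring R" "is_ideal_in R I" "finite A" "j \<in> A" "f j \<in> I" "\<And>i. i \<in> A \<Longrightarrow> f i \<in> R"
  shows "prod f A \<in> I"
proof -
  have "prod f A = f j * prod f (A - {j})" using assms(3,4) by (simp add: prod.remove)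
  moreover have "prod f (A - {j}) \<in> R" using assms by (intro subring_prod) auto
  ultimately show ?thesis using ideal_mult_right[OF assms(2) _ assms(5)] by simp
qed

lemma ideal_one_minus_prod:
  assumes "is_ideal_in R I"
  shows "(\<And>i. i \<in> A \<Longrightarrow> f i \<in> R \<and> 1 - f i \<in> I) \<Longrightarrow> 1 - prod f A \<in> I"
proof (induction A rule: infinite_finite_induct)
  case (insert x F)
  have "1 - prod f (insert x F) = (1 - f x) + f x * (1 - prod f F)"
    using insert by (simp add: algebra_simps)
  also have "\<dots> \<in> I"
    using insert by (intro ideal_add[OF assms] ideal_mult_left[OF assms]) auto
  finally show ?case .
qed (use ideal_zero[OF assms] in simp_all)

lemma ideal_Inter:
  assumes "F \<noteq> {}" "\<And>I. I \<in> F \<Longrightarrow> is_ideal_in R I"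
  shows "is_ideal_in R (\<Inter>F)"
  using assms unfolding is_ideal_in_def by blast

lemma tensor_rel_diff: "x \<in> tensor_rel L K C \<Longrightarrow> y \<in> tensor_rel L K C \<Longrightarrow> x - y \<in> tensor_rel L K C"
  using tensor_rel.add[OF _ tensor_rel.neg[of y]] by simp

lemma tensor_rel_sum: "(\<And>i. i \<in> A \<Longrightarrow> f i \<in> tensor_rel L K C) \<Longrightarrow> sum f A \<in> tensor_rel L K C"
  by (induction A rule: infinite_finite_induct) (auto intro: tensor_rel.zero tensor_rel.add)

lemma tensor_rel_zero_left:
  assumes "0 \<in> L" "c \<in> C" shows "frag_of (0, c) \<in> tensor_rel L K C"
proof -
  have "frag_of (0 + 0, c) - frag_of (0, c) - frag_of (0, c) \<in> tensor_rel L K C"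
    using assms by (intro tensor_rel.add_left) auto
  from tensor_rel.neg[OF this] show ?thesis by simp
qed

lemma tensor_rel_zero_right:
  assumes "l \<in> L" "0 \<in> C" shows "frag_of (l, 0) \<in> tensor_rel L K C"
proof -
  have "frag_of (l, 0 + 0) - frag_of (l, 0) - frag_of (l, 0) \<in> tensor_rel L K C"
    using assms by (intro tensor_rel.add_right) auto
  from tensor_rel.neg[OF this] show ?thesis by simp
qed

lemma tensor_rel_sum_left:
  assumes "is_subring L" "c \<in> C"
  shows "(\<And>i. i \<in> A \<Longrightarrow> f i \<in> L) \<Longrightarrow>
    frag_of (sum f A, c) - (\<Sum>i\<in>A. frag_of (f i, c)) \<in> tensor_rel L K C"
proof (induction A rule: infinite_finite_induct)
  case (insert x F)
  have "sum f F \<in> L" using insert by (intro subring_sum[OF assms(1)]) auto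
  then have "frag_of (f x + sum f F, c) - frag_of (f x, c) - frag_of (sum f F, c) \<in> tensor_rel L K C"
    using insert assms(2) by (intro tensor_rel.add_left) auto
  from tensor_rel.add[OF this insert.IH] insert show ?case
    by (simp add: algebra_simps)
qed (use tensor_rel_zero_left[OF subring_zero[OF assms(1)] assms(2)] in simp_all)

lemma tensor_rel_sum_right:
  assumes "is_subring C" "l \<in> L"
  shows "(\<And>i. i \<in> A \<Longrightarrow> f i \<in> C) \<Longrightarrow>
    frag_of (l, sum f A) - (\<Sum>i\<in>A. frag_of (l, f i)) \<in> tensor_rel L K C"
proof (induction A rule: infinite_finite_induct)
  case (insert x F)
  have "sum f F \<in> C" using insert by (intro subring_sum[OF assms(1)]) auto
  then have "frag_of (l, f x + sum f F) - frag_of (l, f x) - frag_of (l, sum f F) \<in> tensor_rel L K C"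
    using insert assms(2) by (intro tensor_rel.add_right) auto
  from tensor_rel.add[OF this insert.IH] insert show ?case
    by (simp add: algebra_simps)
qed (use tensor_rel_zero_right[OF assms(2) subring_zero[OF assms(1)]] in simp_all)

lemma tensor_rel_cmul:
  assumes "is_subring L" "l \<in> L" "c \<in> C"
  shows "frag_cmul n (frag_of (l, c)) - frag_of (of_int n * l, c) \<in> tensor_rel L K C"
proof (induction n rule: int_induct[where k = 0])
  case base
  then show ?case using tensor_rel.neg[OF tensor_rel_zero_left[OF subring_zero[OF assms(1)] assms(3)]]
    by simp
next
  case (step1 i)
  have "of_int i * l \<in> L" using assms by (intro subring_mult subring_of_int) auto
  then have "frag_of (of_int i * l + l, c) - frag_of (of_int i * l, c) - frag_of (l, c) \<in> tensor_rel L K C"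
    using assms by (intro tensor_rel.add_left) auto
  from tensor_rel_diff[OF step1.IH this] show ?case
    by (simp add: frag_cmul_distrib algebra_simps)
next
  case (step2 i)
  have "of_int (i - 1) * l \<in> L" using assms by (intro subring_mult subring_of_int) auto
  then have "frag_of (of_int (i - 1) * l + l, c) - frag_of (of_int (i - 1) * l, c) - frag_of (l, c)
      \<in> tensor_rel L K C"
    using assms by (intro tensor_rel.add_left) auto
  from tensor_rel.add[OF step2.IH this] show ?case
    by (simp add: frag_cmul_diff_distrib algebra_simps)
qed

lemma tensor_rel_normal_form:
  assumes L: "is_subring L" and x: "x \<in> tensor_reps L C"
  shows "x - (\<Sum>q\<in>Poly_Mapping.keys x. frag_of (of_int (Poly_Mapping.lookup x q) * fst q, snd q))
    \<in> tensor_rel L K C"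
proof -
  have "x = (\<Sum>q\<in>Poly_Mapping.keys x. frag_cmul (Poly_Mapping.lookup x q) (frag_of (fst q, snd q)))"
    by (subst frag_expansion) (simp add: frag_extend_def)
  then have "x - (\<Sum>q\<in>Poly_Mapping.keys x. frag_of (of_int (Poly_Mapping.lookup x q) * fst q, snd q)) =
    (\<Sum>q\<in>Poly_Mapping.keys x. frag_cmul (Poly_Mapping.lookup x q) (frag_of (fst q, snd q)) -
       frag_of (of_int (Poly_Mapping.lookup x q) * fst q, snd q))"
    by (simp add: sum_subtractf)
  also have "\<dots> \<in> tensor_rel L K C"
    using x by (intro tensor_rel_sum tensor_rel_cmul[OF L]) (auto simp: tensor_reps_def)
  finally show ?thesis .
qed

section \<open>Ideals stable under a group action\<close>

definition fixed_points :: "('a \<Rightarrow> 'b \<Rightarrow> 'b) \<Rightarrow> 'a set \<Rightarrow> 'b set \<Rightarrow> 'b set" where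
  "fixed_points act S R = {x \<in> R. \<forall>g\<in>S. act g x = x}"

definition stable_ideal :: "('a \<Rightarrow> 'b::comm_ring_1 \<Rightarrow> 'b) \<Rightarrow> 'a set \<Rightarrow> 'b set \<Rightarrow> 'b set \<Rightarrow> bool" where
  "stable_ideal act S L J \<longleftrightarrow> is_ideal_in L J \<and> stable act S J"

definition maximal_stable_ideal :: "('a \<Rightarrow> 'b::comm_ring_1 \<Rightarrow> 'b) \<Rightarrow> 'a set \<Rightarrow> 'b set \<Rightarrow> 'b set \<Rightarrow> bool" where
  "maximal_stable_ideal act S L M \<longleftrightarrow> stable_ideal act S L M \<and> 1 \<notin> M \<and>
     (\<forall>J. stable_ideal act S L J \<and> 1 \<notin> J \<and> M \<subseteq> J \<longrightarrow> J = M)"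

text \<open>The stable ideals of \<open>L\<close> on which \<open>e\<close> acts as identity are those of the ring \<open>e L\<close>,
  so this says that \<open>e L\<close> is \<open>S\<close>-simple (or zero).\<close>
definition simple_idempotent :: "('a \<Rightarrow> 'b::comm_ring_1 \<Rightarrow> 'b) \<Rightarrow> 'a set \<Rightarrow> 'b set \<Rightarrow> 'b \<Rightarrow> bool" where
  "simple_idempotent act S L e \<longleftrightarrow> e \<in> fixed_points act S L \<and> e * e = e \<and>
     (\<forall>J. stable_ideal act S L J \<and> (\<forall>x\<in>J. x * e = x) \<longrightarrow> J = {0} \<or> e \<in> J)"

lemma chinese_remainder_elements:
  assumes L: "is_subring L" and "finite P" and ideals: "\<And>p. p \<in> P \<Longrightarrow> is_ideal_in L p"
    and comaximal: "\<And>p q. p \<in> P \<Longrightarrow> q \<in> P \<Longrightarrow> q \<noteq> p \<Longrightarrow> \<exists>b\<in>q. 1 - b \<in> p"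
  obtains e where "\<And>p. p \<in> P \<Longrightarrow> e p \<in> L" "\<And>p. p \<in> P \<Longrightarrow> 1 - e p \<in> p"
    "\<And>p q. p \<in> P \<Longrightarrow> q \<in> P \<Longrightarrow> q \<noteq> p \<Longrightarrow> e p \<in> q"
proof -
  obtain b where b: "\<And>p q. p \<in> P \<Longrightarrow> q \<in> P \<Longrightarrow> q \<noteq> p \<Longrightarrow> b p q \<in> q \<and> 1 - b p q \<in> p"
    using comaximal by metis
  then have bL: "\<And>p q. p \<in> P \<Longrightarrow> q \<in> P \<Longrightarrow> q \<noteq> p \<Longrightarrow> b p q \<in> L"
    using ideals ideal_subset by blast
  show thesis
  proof
    fix p assume p: "p \<in> P"
    show "prod (b p) (P - {p}) \<in> L"
      using p bL by (intro subring_prod[OF L]) auto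
    show "1 - prod (b p) (P - {p}) \<in> p"
      using p b bL by (intro ideal_one_minus_prod[OF ideals]) auto
    fix q assume q: "q \<in> P" "q \<noteq> p"
    then show "prod (b p) (P - {p}) \<in> q"
      using p b bL \<open>finite P\<close> by (intro ideal_prod[OF L ideals[OF q(1)], where j = q]) auto
  qed
qed

locale group_ring_action =
  fixes act :: "'a::ab_group_add \<Rightarrow> 'b::comm_ring_1 \<Rightarrow> 'b"
  assumes ring_action: "ring_action act"
begin

lemma act_zero_group [simp]: "act 0 x = x"
  and act_act: "act g (act h x) = act (g + h) x"
  and act_add [simp]: "act g (x + y) = act g x + act g y"
  and act_mult [simp]: "act g (x * y) = act g x * act g y"
  and act_one [simp]: "act g 1 = 1"
  using ring_action unfolding ring_action_def by metis+

lemma act_zero [simp]: "act g 0 = 0"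
  using act_add[of g 0 0] by simp

lemma act_minus [simp]: "act g (- x) = - act g x"
  using act_add[of g x "- x"] by (simp add: eq_neg_iff_add_eq_0 add.commute)

lemma act_diff [simp]: "act g (x - y) = act g x - act g y"
  using act_add[of g x "- y"] by simp

lemma act_sum: "act g (sum f A) = (\<Sum>i\<in>A. act g (f i))"
  by (induction A rule: infinite_finite_induct) auto

lemma act_inverse [simp]: "act (- g) (act g x) = x" "act g (act (- g) x) = x"
  by (simp_all add: act_act)

lemma act_commute: "act g (act h x) = act h (act g x)"
  by (simp add: act_act add.commute)

lemma ex_maximal_stable_ideal:
  assumes L: "is_subring L" and nontrivial: "(1::'b) \<noteq> 0"
  shows "\<exists>M. maximal_stable_ideal act S L M"
proof -
  define A where "A = {J. stable_ideal act S L J \<and> (1::'b) \<notin> J}"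
  have "\<exists>M\<in>A. \<forall>J\<in>A. M \<subseteq> J \<longrightarrow> J = M"
  proof (rule subset_Zorn_nonempty)
    have "{0} \<in> A"
      using L nontrivial by (auto simp: A_def stable_ideal_def is_ideal_in_def stable_def subring_zero)
    then show "A \<noteq> {}" by blast
  next
    fix F assume "F \<noteq> {}" and "subset.chain A F"
    then have F: "\<And>J. J \<in> F \<Longrightarrow> is_ideal_in L J \<and> stable act S J \<and> 1 \<notin> J"
      and linear: "\<And>I J. I \<in> F \<Longrightarrow> J \<in> F \<Longrightarrow> I \<subseteq> J \<or> J \<subseteq> I"
      by (auto simp: subset.chain_def A_def stable_ideal_def)
    have "is_ideal_in L (\<Union>F)"
      unfolding is_ideal_in_def
    proof (intro conjI ballI)
      fix x y assume "x \<in> \<Union>F" "y \<in> \<Union>F"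
      then obtain I J where "I \<in> F" "J \<in> F" "x \<in> I \<union> J" "y \<in> I \<union> J"
        by blast
      with linear[of I J] F show "x + y \<in> \<Union>F"
        by (metis Un_absorb1 Un_absorb2 UnionI ideal_add)
    qed (use F \<open>F \<noteq> {}\<close> ideal_subset ideal_zero ideal_mult_left in blast)+
    then show "\<Union>F \<in> A"
      using F by (auto simp: A_def stable_ideal_def stable_def)
  qed
  then show ?thesis
    unfolding A_def maximal_stable_ideal_def by blast
qed

lemma stable_ideal_image:
  assumes L: "stable act UNIV L" and J: "stable_ideal act S L J"
  shows "stable_ideal act S L (act g ` J)"
proof -
  have J: "is_ideal_in L J" "\<And>h x. h \<in> S \<Longrightarrow> x \<in> J \<Longrightarrow> act h x \<in> J"
    using J by (auto simp: stable_ideal_def stable_def)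
  show ?thesis
    unfolding stable_ideal_def is_ideal_in_def stable_def
  proof (intro conjI ballI)
  show "act g ` J \<subseteq> L" "0 \<in> act g ` J"
    using L J(1) by (force simp: stable_def is_ideal_in_def)+
  fix x y assume "x \<in> act g ` J" "y \<in> act g ` J"
  then show "x + y \<in> act g ` J"
    using ideal_add[OF J(1)] by (auto simp flip: act_add)
next
  fix r x assume r: "r \<in> L" and "x \<in> act g ` J"
  then obtain z where z: "z \<in> J" "x = act g z" by auto
  have "act (- g) r * z \<in> J"
    using L r by (intro ideal_mult_left[OF J(1) _ z(1)]) (auto simp: stable_def)
  moreover have "r * x = act g (act (- g) r * z)" using z by simp
  ultimately show "r * x \<in> act g ` J" by blast
next
  fix h x assume "h \<in> S" "x \<in> act g ` J"
  then show "act h x \<in> act g ` J" using J(2) by (auto simp: act_commute)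
qed
qed

lemma maximal_stable_ideal_image:
  assumes L: "stable act UNIV L" and M: "maximal_stable_ideal act S L M"
  shows "maximal_stable_ideal act S L (act g ` M)"
  unfolding maximal_stable_ideal_def
proof (intro conjI allI impI)
  show "stable_ideal act S L (act g ` M)"
    using stable_ideal_image[OF L] M by (simp add: maximal_stable_ideal_def)
  show "1 \<notin> act g ` M"
    using M by (force simp: maximal_stable_ideal_def dest: arg_cong[where f = "act (- g)"])
next
  fix J assume J: "stable_ideal act S L J \<and> 1 \<notin> J \<and> act g ` M \<subseteq> J"
  have "act (- g) ` J = M"
  proof -
    have "1 \<notin> act (- g) ` J"
      using J by (force dest: arg_cong[where f = "act g"])
    moreover have "M \<subseteq> act (- g) ` J"
      using J by (force simp: image_subset_iff)
    ultimately show ?thesis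
      using M stable_ideal_image[OF L] J by (auto simp: maximal_stable_ideal_def)
  qed
  then show "J = act g ` M" by (force simp: image_image)
qed

lemma stable_ideal_sum:
  assumes L: "is_subring L" and I: "stable_ideal act S L I" and J: "stable_ideal act S L J"
  shows "stable_ideal act S L {i + j | i j. i \<in> I \<and> j \<in> J}"
proof -
  define IJ where "IJ = {i + j | i j. i \<in> I \<and> j \<in> J}"
  have I': "is_ideal_in L I" "\<And>g x. g \<in> S \<Longrightarrow> x \<in> I \<Longrightarrow> act g x \<in> I"
    and J': "is_ideal_in L J" "\<And>g x. g \<in> S \<Longrightarrow> x \<in> J \<Longrightarrow> act g x \<in> J"
    using I J by (auto simp: stable_ideal_def stable_def)
  have IJI: "i + j \<in> IJ" if "i \<in> I" "j \<in> J" for i j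
    using that unfolding IJ_def by blast
  have IJE: "\<exists>i\<in>I. \<exists>j\<in>J. x = i + j" if "x \<in> IJ" for x
    using that unfolding IJ_def by blast
  have "0 \<in> IJ"
    using IJI[OF ideal_zero[OF I'(1)] ideal_zero[OF J'(1)]] by simp
  moreover have "x + y \<in> IJ" if "x \<in> IJ" and "y \<in> IJ" for x y
  proof -
    obtain i j i' j' where "i \<in> I" "j \<in> J" "i' \<in> I" "j' \<in> J" "x = i + j" "y = i' + j'"
      using IJE[OF \<open>x \<in> IJ\<close>] IJE[OF \<open>y \<in> IJ\<close>] by blast
    then show ?thesis
      using IJI[OF ideal_add[OF I'(1)] ideal_add[OF J'(1)], of i i' j j'] by (simp add: ac_simps)
  qed
  moreover have "r * x \<in> IJ" if "r \<in> L" and "x \<in> IJ" for r x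
  proof -
    obtain i j where "i \<in> I" "j \<in> J" "x = i + j"
      using IJE[OF \<open>x \<in> IJ\<close>] by blast
    then show ?thesis
      using IJI[OF ideal_mult_left[OF I'(1) \<open>r \<in> L\<close>] ideal_mult_left[OF J'(1) \<open>r \<in> L\<close>], of i j]
      by (simp add: distrib_left)
  qed
  moreover have "act g x \<in> IJ" if "g \<in> S" and "x \<in> IJ" for g x
  proof -
    obtain i j where "i \<in> I" "j \<in> J" "x = i + j"
      using IJE[OF \<open>x \<in> IJ\<close>] by blast
    then show ?thesis
      using IJI[OF I'(2)[OF \<open>g \<in> S\<close>] J'(2)[OF \<open>g \<in> S\<close>], of i j] by simp
  qed
  moreover have "IJ \<subseteq> L"
  proof
    fix x assume "x \<in> IJ"
    then obtain i j where "i \<in> I" "j \<in> J" "x = i + j" using IJE by blast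
    then show "x \<in> L" using ideal_subset[OF I'(1)] ideal_subset[OF J'(1)] subring_add[OF L] by simp
  qed
  ultimately have "stable_ideal act S L IJ"
    unfolding stable_ideal_def is_ideal_in_def stable_def by blast
  then show ?thesis by (simp add: IJ_def)
qed

lemma maximal_stable_ideal_comaximal:
  assumes L: "is_subring L" and p: "maximal_stable_ideal act S L p"
    and J: "stable_ideal act S L J" and "\<not> J \<subseteq> p"
  shows "\<exists>j\<in>J. \<exists>a\<in>p. j + a = 1"
proof (rule ccontr)
  assume no_decomposition: "\<not> (\<exists>j\<in>J. \<exists>a\<in>p. j + a = 1)"
  define Q where "Q = {j + a | j a. j \<in> J \<and> a \<in> p}"
  have "stable_ideal act S L Q"
    using stable_ideal_sum[OF L J] p by (simp add: Q_def maximal_stable_ideal_def)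
  moreover have "1 \<notin> Q"
    using no_decomposition by (auto simp: Q_def)
  moreover have "0 \<in> J" "0 \<in> p"
    using J p ideal_zero unfolding maximal_stable_ideal_def stable_ideal_def by blast+
  then have "p \<subseteq> Q" "J \<subseteq> Q"
    unfolding Q_def by (metis (mono_tags, lifting) add_0 add_0_right mem_Collect_eq subsetI)+
  ultimately show False
    using p \<open>\<not> J \<subseteq> p\<close> unfolding maximal_stable_ideal_def by blast
qed


end

locale chinese_remainder_idempotents =
  group_ring_action act for act :: "'a::ab_group_add \<Rightarrow> 'b::comm_ring_1 \<Rightarrow> 'b" +
  fixes S :: "'a set" and L :: "'b set" and P :: "'b set set" and e :: "'b set \<Rightarrow> 'b"
  assumes subring: "is_subring L"
    and finite_P: "finite P"
    and maximal: "p \<in> P \<Longrightarrow> maximal_stable_ideal act S L p"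
    and Inter_P_zero: "(\<And>p. p \<in> P \<Longrightarrow> x \<in> p) \<Longrightarrow> x = 0"
    and e_in_L: "p \<in> P \<Longrightarrow> e p \<in> L"
    and one_minus_e: "p \<in> P \<Longrightarrow> 1 - e p \<in> p"
    and e_in_other: "p \<in> P \<Longrightarrow> q \<in> P \<Longrightarrow> q \<noteq> p \<Longrightarrow> e p \<in> q"
begin

lemma ideal: "p \<in> P \<Longrightarrow> is_ideal_in L p"
  and ideal_stable: "p \<in> P \<Longrightarrow> g \<in> S \<Longrightarrow> x \<in> p \<Longrightarrow> act g x \<in> p"
  using maximal by (auto simp: maximal_stable_ideal_def stable_ideal_def stable_def)

lemma eq_zero_by_cases:
  assumes "p \<in> P" "x \<in> p" "\<And>q. q \<in> P \<Longrightarrow> q \<noteq> p \<Longrightarrow> x \<in> q"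
  shows "x = 0"
  using assms by (metis Inter_P_zero)

lemma sum_e: "(\<Sum>p\<in>P. e p) = 1"
proof -
  have "1 - (\<Sum>p\<in>P. e p) = 0"
  proof (rule Inter_P_zero)
    fix q assume q: "q \<in> P"
    have "1 - (\<Sum>p\<in>P. e p) = (1 - e q) - (\<Sum>p\<in>P - {q}. e p)"
      using q finite_P by (simp add: sum.remove)
    also have "\<dots> \<in> q"
      using q e_in_other by (intro ideal_diff[OF subring ideal] ideal_sum[OF ideal] one_minus_e) auto
    finally show "1 - (\<Sum>p\<in>P. e p) \<in> q" .
  qed
  then show ?thesis by simp
qed

lemma e_idempotent:
  assumes p: "p \<in> P" shows "e p * e p = e p"
proof -
  have "(e p - 1) * e p = 0"
  proof (rule eq_zero_by_cases[OF p])
    have "e p - 1 \<in> p" using ideal_uminus[OF subring ideal[OF p] one_minus_e[OF p]] by simp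
    then show "(e p - 1) * e p \<in> p" using ideal_mult_right[OF ideal[OF p] e_in_L[OF p]] by blast
  next
    fix q assume "q \<in> P" "q \<noteq> p"
    then show "(e p - 1) * e p \<in> q"
      using p e_in_L subring_one[OF subring] e_in_other
      by (intro ideal_mult_left[OF ideal] subring_diff[OF subring]) auto
  qed
  then show ?thesis by (simp add: algebra_simps)
qed

lemma e_fixed:
  assumes p: "p \<in> P" shows "e p \<in> fixed_points act S L"
proof -
  have "act g (e p) - e p = 0" if g: "g \<in> S" for g
  proof (rule eq_zero_by_cases[OF p])
    have "act g (e p) - e p = (1 - e p) - act g (1 - e p)" by simp
    also have "\<dots> \<in> p"
      using p g by (intro ideal_diff[OF subring ideal] ideal_stable one_minus_e)
    finally show "act g (e p) - e p \<in> p" .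
  next
    fix q assume "q \<in> P" "q \<noteq> p"
    then show "act g (e p) - e p \<in> q"
      using p g e_in_other by (intro ideal_diff[OF subring ideal] ideal_stable) auto
  qed
  then show ?thesis using e_in_L[OF p] by (simp add: fixed_points_def)
qed

lemma e_stable_ideal_cases:
  assumes p: "p \<in> P" and J: "stable_ideal act S L J" and e_unit: "\<And>x. x \<in> J \<Longrightarrow> x * e p = x"
  shows "J = {0} \<or> e p \<in> J"
proof (cases "J \<subseteq> p")
  case True
  have "x = 0" if x: "x \<in> J" for x
  proof (rule eq_zero_by_cases[OF p])
    show "x \<in> p" using x True by blast
  next
    fix q assume "q \<in> P" "q \<noteq> p"
    then have "x * e p \<in> q"
      using p J x e_in_other by (intro ideal_mult_left[OF ideal]) (auto simp: stable_ideal_def ideal_subset)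
    then show "x \<in> q" using e_unit[OF x] by simp
  qed
  then show ?thesis using J ideal_zero by (auto simp: stable_ideal_def)
next
  case False
  obtain j a where ja: "j \<in> J" "a \<in> p" "j + a = 1"
    using maximal_stable_ideal_comaximal[OF subring maximal[OF p] J False] by blast
  have "a * e p = 0"
  proof (rule eq_zero_by_cases[OF p])
    show "a * e p \<in> p" using ideal_mult_right[OF ideal[OF p] e_in_L[OF p] ja(2)] .
  next
    fix q assume "q \<in> P" "q \<noteq> p"
    then show "a * e p \<in> q"
      using p ja(2) e_in_other ideal_subset[OF ideal[OF p]] by (intro ideal_mult_left[OF ideal]) auto
  qed
  moreover have "e p = j * e p + a * e p" using ja(3) by (metis distrib_right mult_1)
  ultimately have "e p = j" using e_unit[OF ja(1)] by simp
  then show ?thesis using ja(1) by simp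
qed

lemma e_simple_idempotent: "p \<in> P \<Longrightarrow> simple_idempotent act S L (e p)"
  using e_fixed e_idempotent e_stable_ideal_cases by (simp add: simple_idempotent_def)

end

section \<open>Decomposition of a \<open>\<Sigma>\<close>-simple ring\<close>

definition Sigma0 :: "(int \<times> 'g::ab_group_add) set" where
  "Sigma0 = {(m, 0) | m. True}"

lemma invariants_eq_fixed_points_Sigma0:
  fixes act :: "int \<times> 'g::ab_group_add \<Rightarrow> 'b::comm_ring_1 \<Rightarrow> 'b"
  assumes "ring_action act"
  shows "invariants act R = fixed_points act Sigma0 R"
proof -
  interpret group_ring_action act by unfold_locales (fact assms)
  have "act (m, 0) x = x" if "act (1, 0) x = x" for m :: int and x
  proof (induction m rule: int_induct[where k = 0])
    case (step1 i)
    then show ?case using that act_act[of "(1, 0)" "(i, 0)" x] by (simp add: add.commute)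
  next
    case (step2 i)
    have "act (i - 1, 0) x = act (- (1, 0)) (act (i, 0) x)" by (simp add: act_act)
    then show ?case using step2 that act_inverse(1)[of "(1, 0)" x] by simp
  qed (simp add: zero_prod_def[symmetric])
  then show ?thesis
    by (auto simp: invariants_def fixed_points_def Sigma0_def sigma_def)
qed

locale Sigma_simple_ring =
  group_ring_action act for act :: "int \<times> 'g::{finite, ab_group_add} \<Rightarrow> 'b::comm_ring_1 \<Rightarrow> 'b" +
  fixes L :: "'b set"
  assumes subring: "is_subring L" and stable: "stable act UNIV L" and simple: "act_simple act UNIV L"
begin

lemma one_neq_zero: "(1::'b) \<noteq> 0"
proof
  assume "(1::'b) = 0"
  then have "\<And>x::'b. x = 0" by (metis mult_1 mult_zero_left)
  then show False using simple subring_zero[OF subring] by (auto simp: act_simple_def)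
qed

text \<open>The \<open>\<Sigma>\<^sub>1\<close>-translates of a maximal \<open>\<sigma>\<close>-ideal cut out a \<open>\<Sigma>\<close>-ideal, which is proper and
  hence zero.\<close>
lemma orbit_Inter_zero:
  assumes M: "maximal_stable_ideal act Sigma0 L M" and x: "\<And>t. x \<in> act (0, t) ` M"
  shows "x = 0"
proof -
  define Z where "Z = (\<Inter>t. act (0, t) ` M)"
  have orbit: "stable_ideal act Sigma0 L (act (0, t) ` M)" for t
    using stable_ideal_image[OF stable] M by (simp add: maximal_stable_ideal_def)
  have "is_ideal_in L Z"
    unfolding Z_def using orbit by (intro ideal_Inter) (auto simp: stable_ideal_def)
  moreover have "act g a \<in> Z" if a: "a \<in> Z" for g a
  proof -
    obtain n s where g: "g = (n, s)" by force
    have "act g a \<in> act (0, t) ` M" for t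
    proof -
      have "a \<in> act (0, t - s) ` M" using a by (simp add: Z_def)
      moreover have "stable act Sigma0 (act (0, t - s) ` M)"
        using orbit by (simp add: stable_ideal_def)
      moreover have "(n, 0) \<in> Sigma0" by (simp add: Sigma0_def)
      ultimately have "act (n, 0) a \<in> act (0, t - s) ` M"
        unfolding stable_def by blast
      then obtain z where z: "z \<in> M" "act (n, 0) a = act (0, t - s) z" by blast
      have "act g a = act (0, s) (act (n, 0) a)" using g by (simp add: act_act)
      also have "\<dots> = act (0, t) z" using z by (simp add: act_act)
      finally show ?thesis using z(1) by blast
    qed
    then show ?thesis by (simp add: Z_def)
  qed
  moreover have "Z \<noteq> L"
  proof
    assume "Z = L"
    then have "1 \<in> act (0, 0) ` M" using subring_one[OF subring] unfolding Z_def by blast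
    then show False using M by (simp add: maximal_stable_ideal_def zero_prod_def[symmetric])
  qed
  moreover have "stable act UNIV Z"
    using calculation(2) by (simp add: stable_def)
  ultimately have "Z = {0}"
    using simple unfolding act_simple_def by blast
  then show ?thesis using x by (auto simp: Z_def)
qed

lemma simple_idempotent_decomposition:
  obtains P :: "'b set set" and e where "finite P" "(\<Sum>p\<in>P. e p) = 1"
    "\<And>p. p \<in> P \<Longrightarrow> simple_idempotent act Sigma0 L (e p)"
proof -
  note decomposition = that
  obtain M where M: "maximal_stable_ideal act Sigma0 L M"
    using ex_maximal_stable_ideal[OF subring one_neq_zero] by blast
  define P where "P = range (\<lambda>t. act (0, t) ` M)"
  have maximal: "maximal_stable_ideal act Sigma0 L p" if "p \<in> P" for p
    using that maximal_stable_ideal_image[OF stable M] by (auto simp: P_def)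
  have comaximal: "\<exists>b\<in>q. 1 - b \<in> p" if p: "p \<in> P" and q: "q \<in> P" and "q \<noteq> p" for p q
  proof -
    have "\<not> q \<subseteq> p"
      using maximal[OF q] maximal[OF p] \<open>q \<noteq> p\<close> by (auto simp: maximal_stable_ideal_def)
    moreover have "stable_ideal act Sigma0 L q"
      using maximal[OF q] by (simp add: maximal_stable_ideal_def)
    ultimately obtain j a where "j \<in> q" "a \<in> p" "j + a = 1"
      using maximal_stable_ideal_comaximal[OF subring maximal[OF p]] by blast
    then show ?thesis by (metis add_diff_cancel_left')
  qed
  have "finite P" by (simp add: P_def)
  moreover have "is_ideal_in L p" if "p \<in> P" for p
    using maximal[OF that] by (simp add: maximal_stable_ideal_def stable_ideal_def)
  ultimately obtain e where "\<And>p. p \<in> P \<Longrightarrow> e p \<in> L" "\<And>p. p \<in> P \<Longrightarrow> 1 - e p \<in> p"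
    "\<And>p q. p \<in> P \<Longrightarrow> q \<in> P \<Longrightarrow> q \<noteq> p \<Longrightarrow> e p \<in> q"
    using chinese_remainder_elements[OF subring _ _ comaximal] by blast
  moreover have "(\<And>p. p \<in> P \<Longrightarrow> x \<in> p) \<Longrightarrow> x = 0" for x
    using orbit_Inter_zero[OF M] by (auto simp: P_def)
  ultimately interpret chinese_remainder_idempotents where act = act and S = Sigma0 and L = L and P = P and e = e
    using subring maximal \<open>finite P\<close> by unfold_locales blast+
  show thesis
    by (rule decomposition[OF finite_P sum_e e_simple_idempotent])
qed

end

section \<open>Linear disjointness from the constants\<close>

locale constant_subring =
  group_ring_action act for act :: "'a::ab_group_add \<Rightarrow> 'b::comm_ring_1 \<Rightarrow> 'b" +
  fixes S :: "'a set" and L C :: "'b set"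
  assumes subring_L: "is_subring L" and subring_C: "is_subring C"
    and stable_L: "stable act S L"
    and C_fixed: "C \<subseteq> fixed_points act S UNIV"
    and constants_in_C: "fixed_points act S L \<subseteq> C"
begin

abbreviation K :: "'b set" where "K \<equiv> fixed_points act S L"

definition linear_relation :: "'b \<Rightarrow> 'i set \<Rightarrow> ('i \<Rightarrow> 'b) \<Rightarrow> ('i \<Rightarrow> 'b) \<Rightarrow> bool" where
  "linear_relation e A c v \<longleftrightarrow> (\<forall>i\<in>A. v i \<in> L \<and> v i * e = v i) \<and> (\<Sum>i\<in>A. v i * c i) = 0"

definition has_constant_relation :: "'b \<Rightarrow> 'i set \<Rightarrow> ('i \<Rightarrow> 'b) \<Rightarrow> bool" where
  "has_constant_relation e A c \<longleftrightarrow>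
     (\<exists>k j. j \<in> A \<and> k j = e \<and> linear_relation e A c k \<and> (\<forall>i\<in>A. k i \<in> K))"

lemma act_fixes_C: "g \<in> S \<Longrightarrow> c \<in> C \<Longrightarrow> act g c = c"
  using C_fixed by (auto simp: fixed_points_def)

lemma linear_relation_add:
  "linear_relation e A c v \<Longrightarrow> linear_relation e A c w \<Longrightarrow> linear_relation e A c (\<lambda>i. v i + w i)"
  by (simp add: linear_relation_def subring_add[OF subring_L] distrib_right sum.distrib)

lemma linear_relation_diff:
  "linear_relation e A c v \<Longrightarrow> linear_relation e A c w \<Longrightarrow> linear_relation e A c (\<lambda>i. v i - w i)"
  by (simp add: linear_relation_def subring_diff[OF subring_L] left_diff_distrib sum_subtractf)

lemma linear_relation_scale:
  "r \<in> L \<Longrightarrow> linear_relation e A c v \<Longrightarrow> linear_relation e A c (\<lambda>i. r * v i)"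
  by (simp add: linear_relation_def subring_mult[OF subring_L] mult.assoc flip: sum_distrib_left)

lemma linear_relation_act:
  assumes "g \<in> S" "act g e = e" "\<forall>i\<in>A. c i \<in> C" "linear_relation e A c v"
  shows "linear_relation e A c (\<lambda>i. act g (v i))"
proof -
  have "(\<Sum>i\<in>A. act g (v i) * c i) = act g (\<Sum>i\<in>A. v i * c i)"
    using assms(1,3) act_fixes_C by (simp add: act_sum)
  then show ?thesis
    using assms stable_L unfolding linear_relation_def stable_def by (metis act_mult act_zero)
qed

lemma linear_relation_remove:
  assumes "finite A" "j \<in> A" "v j = 0" "linear_relation e A c v"
  shows "linear_relation e (A - {j}) c v"
  using assms by (simp add: linear_relation_def sum.remove)

lemma has_constant_relation_insert:
  assumes "finite B" "j \<notin> B" "has_constant_relation e B c"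
  shows "has_constant_relation e (insert j B) c"
proof -
  obtain k i where "i \<in> B" "k i = e" "linear_relation e B c k" "\<forall>i\<in>B. k i \<in> K"
    using assms(3) by (auto simp: has_constant_relation_def)
  moreover have "0 \<in> K" by (simp add: fixed_points_def subring_zero[OF subring_L])
  moreover have "(\<Sum>i\<in>B. (k(j := 0)) i * c i) = (\<Sum>i\<in>B. k i * c i)"
    using assms(2) by (intro sum.cong) auto
  ultimately show ?thesis
    using assms(1,2) unfolding has_constant_relation_def linear_relation_def
    by (intro exI[of _ "k(j := 0)"] exI[of _ i]) (auto simp: subring_zero[OF subring_L])
qed

lemma relation_coordinates_ideal:
  assumes e: "e \<in> K" and "j \<in> A" and c: "\<forall>i\<in>A. c i \<in> C"
  shows "stable_ideal act S L {v j | v. linear_relation e A c v}"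
  unfolding stable_ideal_def is_ideal_in_def stable_def
proof (intro conjI ballI)
  show "{v j | v. linear_relation e A c v} \<subseteq> L"
    using \<open>j \<in> A\<close> by (auto simp: linear_relation_def)
  have "linear_relation e A c (\<lambda>_. 0)"
    by (simp add: linear_relation_def subring_zero[OF subring_L])
  then show "0 \<in> {v j | v. linear_relation e A c v}" by force
next
  fix x y assume "x \<in> {v j | v. linear_relation e A c v}" "y \<in> {v j | v. linear_relation e A c v}"
  then obtain v w where "x = v j" "y = w j" "linear_relation e A c v" "linear_relation e A c w"
    by blast
  then show "x + y \<in> {v j | v. linear_relation e A c v}"
    using linear_relation_add by force
next
  fix r x assume "r \<in> L" "x \<in> {v j | v. linear_relation e A c v}"
  then show "r * x \<in> {v j | v. linear_relation e A c v}"
    using linear_relation_scale by force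
next
  fix g x assume "g \<in> S" "x \<in> {v j | v. linear_relation e A c v}"
  then show "act g x \<in> {v j | v. linear_relation e A c v}"
    using linear_relation_act[OF _ _ c] e by (force simp: fixed_points_def)
qed

lemma normalised_relation_invariant:
  assumes eK: "e \<in> K" and "finite B" "j \<notin> B" and c: "\<forall>i\<in>insert j B. c i \<in> C"
    and trivial_B: "\<And>u. linear_relation e B c u \<Longrightarrow> \<forall>i\<in>B. u i = 0"
    and w: "linear_relation e (insert j B) c w" "w j = e"
  shows "\<forall>i\<in>insert j B. w i \<in> K"
proof -
  have "act g (w i) = w i" if g: "g \<in> S" and i: "i \<in> insert j B" for g i
  proof -
    have "act g e = e" using eK g by (simp add: fixed_points_def)
    then have "linear_relation e (insert j B) c (\<lambda>i. act g (w i) - w i)"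
      using linear_relation_diff[OF linear_relation_act[OF g _ c w(1)] w(1)] by simp
    moreover have "act g (w j) - w j = 0" using \<open>act g e = e\<close> w(2) by simp
    ultimately have "linear_relation e (insert j B - {j}) c (\<lambda>i. act g (w i) - w i)"
      using \<open>finite B\<close> by (intro linear_relation_remove) auto
    then have "linear_relation e B c (\<lambda>i. act g (w i) - w i)"
      using \<open>j \<notin> B\<close> by simp
    from trivial_B[OF this] have "\<forall>i\<in>B. act g (w i) - w i = 0" .
    then show ?thesis using i \<open>act g e = e\<close> w(2) by auto
  qed
  then show ?thesis using w(1) by (simp add: fixed_points_def linear_relation_def)
qed

text \<open>The \<open>j\<close>-th coefficients of the relations form a stable ideal inside \<open>e L\<close>; by
  simplicity it is zero, or it contains \<open>e\<close> and yields a constant relation.\<close>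
lemma linear_relation_trivial:
  assumes e: "simple_idempotent act S L e" and "finite A"
  shows "\<forall>i\<in>A. c i \<in> C \<Longrightarrow> \<not> has_constant_relation e A c \<Longrightarrow> linear_relation e A c u \<Longrightarrow>
    \<forall>i\<in>A. u i = 0"
  using \<open>finite A\<close>
proof (induction A arbitrary: u rule: finite_induct)
  case empty
  then show ?case by simp
next
  case (insert j B)
  have eK: "e \<in> K" and simple:
    "\<And>J. stable_ideal act S L J \<Longrightarrow> (\<forall>x\<in>J. x * e = x) \<Longrightarrow> J = {0} \<or> e \<in> J"
    using e by (auto simp: simple_idempotent_def)
  have no_relation_B: "\<not> has_constant_relation e B c"
  proof
    assume "has_constant_relation e B c"
    then have "has_constant_relation e (insert j B) c"
      by (rule has_constant_relation_insert[OF insert.hyps])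
    then show False using insert.prems(2) by simp
  qed
  have trivial_B: "\<forall>i\<in>B. v i = 0" if "linear_relation e B c v" for v
    using insert.IH[OF _ no_relation_B that] insert.prems(1) by simp
  define J where "J = {v j | v. linear_relation e (insert j B) c v}"
  have "stable_ideal act S L J"
    unfolding J_def by (rule relation_coordinates_ideal[OF eK insertI1 insert.prems(1)])
  moreover have "\<forall>x\<in>J. x * e = x"
  proof
    fix x assume "x \<in> J"
    then obtain v where "x = v j" "linear_relation e (insert j B) c v"
      unfolding J_def by blast
    then show "x * e = x" by (simp add: linear_relation_def)
  qed
  ultimately consider "J = {0}" | "e \<in> J" using simple by blast
  then show ?case
  proof cases
    case 1
    have "u j \<in> J" unfolding J_def using insert.prems(3) by blast
    then have "u j = 0" using 1 by simp
    then have "linear_relation e (insert j B - {j}) c u"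
      using insert.hyps(1) insert.prems(3) by (intro linear_relation_remove) auto
    then show ?thesis
      using trivial_B \<open>u j = 0\<close> insert.hyps(2) by simp
  next
    case 2
    then obtain w where w: "linear_relation e (insert j B) c w" "w j = e"
      unfolding J_def by blast
    have "\<forall>i\<in>insert j B. w i \<in> K"
      by (rule normalised_relation_invariant[OF eK insert.hyps insert.prems(1) trivial_B w])
    then have "has_constant_relation e (insert j B) c"
      unfolding has_constant_relation_def using w by (intro exI[of _ w] exI[of _ j]) simp
    then show ?thesis using insert.prems(2) by blast
  qed
qed

lemma tensor_rel_constant_relation:
  assumes "l \<in> L" and k: "\<And>i. i \<in> A \<Longrightarrow> k i \<in> K" and c: "\<And>i. i \<in> A \<Longrightarrow> c i \<in> C"
    and relation: "(\<Sum>i\<in>A. k i * c i) = 0"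
  shows "(\<Sum>i\<in>A. frag_of (l * k i, c i)) \<in> tensor_rel L K C"
proof -
  have kc: "k i * c i \<in> C" if "i \<in> A" for i
    using k[OF that] c[OF that] constants_in_C subring_mult[OF subring_C] by blast
  have "(\<Sum>i\<in>A. frag_of (l * k i, c i)) =
     (\<Sum>i\<in>A. frag_of (l * k i, c i) - frag_of (l, k i * c i)) -
     (frag_of (l, \<Sum>i\<in>A. k i * c i) - (\<Sum>i\<in>A. frag_of (l, k i * c i))) + frag_of (l, 0)"
    by (simp add: sum_subtractf relation)
  also have "\<dots> \<in> tensor_rel L K C"
  proof -
    have "(\<Sum>i\<in>A. frag_of (l * k i, c i) - frag_of (l, k i * c i)) \<in> tensor_rel L K C"
      using assms by (intro tensor_rel_sum tensor_rel.scalar) auto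
    moreover have "frag_of (l, \<Sum>i\<in>A. k i * c i) - (\<Sum>i\<in>A. frag_of (l, k i * c i))
        \<in> tensor_rel L K C"
      using kc by (intro tensor_rel_sum_right[OF subring_C \<open>l \<in> L\<close>])
    moreover have "frag_of (l, 0) \<in> tensor_rel L K C"
      by (rule tensor_rel_zero_right[OF \<open>l \<in> L\<close> subring_zero[OF subring_C]])
    ultimately show ?thesis by (intro tensor_rel.add) (rule tensor_rel_diff)
  qed
  finally show ?thesis .
qed

lemma tensor_rel_subtract_constant_relation:
  assumes "r \<in> L" and l: "linear_relation e A c l"
    and k: "linear_relation e A c k" "\<forall>i\<in>A. k i \<in> K" and c: "\<forall>i\<in>A. c i \<in> C"
  shows "(\<Sum>i\<in>A. frag_of (l i, c i)) - (\<Sum>i\<in>A. frag_of (l i - r * k i, c i)) \<in> tensor_rel L K C"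
proof -
  have "(\<Sum>i\<in>A. frag_of (l i, c i)) - (\<Sum>i\<in>A. frag_of (l i - r * k i, c i)) =
    (\<Sum>i\<in>A. frag_of ((l i - r * k i) + r * k i, c i) - frag_of (l i - r * k i, c i) -
       frag_of (r * k i, c i)) + (\<Sum>i\<in>A. frag_of (r * k i, c i))"
    by (simp add: sum_subtractf)
  also have "\<dots> \<in> tensor_rel L K C"
  proof (rule tensor_rel.add)
    show "(\<Sum>i\<in>A. frag_of ((l i - r * k i) + r * k i, c i) - frag_of (l i - r * k i, c i) -
        frag_of (r * k i, c i)) \<in> tensor_rel L K C"
      using \<open>r \<in> L\<close> l k c
      by (intro tensor_rel_sum tensor_rel.add_left)
        (auto simp: linear_relation_def fixed_points_def subring_mult[OF subring_L]
          subring_diff[OF subring_L])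
    show "(\<Sum>i\<in>A. frag_of (r * k i, c i)) \<in> tensor_rel L K C"
      using \<open>r \<in> L\<close> k c by (intro tensor_rel_constant_relation) (auto simp: linear_relation_def)
  qed
  finally show ?thesis .
qed

lemma linear_relation_in_tensor_rel:
  assumes e: "simple_idempotent act S L e" and "finite A"
  shows "\<forall>i\<in>A. c i \<in> C \<Longrightarrow> linear_relation e A c l \<Longrightarrow>
    (\<Sum>i\<in>A. frag_of (l i, c i)) \<in> tensor_rel L K C"
  using \<open>finite A\<close>
proof (induction A arbitrary: l rule: finite_remove_induct)
  case empty
  then show ?case by (simp add: tensor_rel.zero)
next
  case (remove A)
  show ?case
  proof (cases "has_constant_relation e A c")
    case False
    then have "\<forall>i\<in>A. l i = 0"
      using linear_relation_trivial[OF e remove.hyps(1) remove.prems(1)] remove.prems(2) by simp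
    then show ?thesis
      using tensor_rel_zero_left[OF subring_zero[OF subring_L]] remove.prems(1)
      by (intro tensor_rel_sum) auto
  next
    case True
    then obtain k j where kj: "j \<in> A" "k j = e" "linear_relation e A c k" "\<forall>i\<in>A. k i \<in> K"
      by (auto simp: has_constant_relation_def)
    define l' where "l' i = l i - l j * k i" for i
    have lj: "l j \<in> L" "l j * e = l j"
      using remove.prems(2) kj(1) by (auto simp: linear_relation_def)
    have l': "linear_relation e A c l'"
      unfolding l'_def using linear_relation_diff[OF remove.prems(2) linear_relation_scale[OF lj(1) kj(3)]] .
    have "l' j = 0" using kj(2) lj(2) by (simp add: l'_def)
    have "frag_of (l' j, c j) \<in> tensor_rel L K C"
      using \<open>l' j = 0\<close> kj(1) remove.prems(1) tensor_rel_zero_left[OF subring_zero[OF subring_L]]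
      by simp
    moreover have "(\<Sum>i\<in>A - {j}. frag_of (l' i, c i)) \<in> tensor_rel L K C"
      using remove.IH[OF kj(1)] linear_relation_remove[OF remove.hyps(1) kj(1) \<open>l' j = 0\<close> l']
        remove.prems(1) by simp
    ultimately have "(\<Sum>i\<in>A. frag_of (l' i, c i)) \<in> tensor_rel L K C"
      using tensor_rel.add by (simp add: sum.remove[OF remove.hyps(1) kj(1)])
    moreover have "(\<Sum>i\<in>A. frag_of (l i, c i)) - (\<Sum>i\<in>A. frag_of (l' i, c i)) \<in> tensor_rel L K C"
      unfolding l'_def
      by (rule tensor_rel_subtract_constant_relation[OF lj(1) remove.prems(2) kj(3,4) remove.prems(1)])
    ultimately show ?thesis
      using tensor_rel.add by fastforce
  qed
qed

lemma relation_component_in_tensor_rel: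
  assumes e: "simple_idempotent act S L e" and "finite A"
    and lc: "\<And>q. q \<in> A \<Longrightarrow> l q \<in> L \<and> c q \<in> C" and relation: "(\<Sum>q\<in>A. l q * c q) = 0"
  shows "(\<Sum>q\<in>A. frag_of (l q * e, c q)) \<in> tensor_rel L K C"
proof -
  have "e \<in> L" "e * e = e"
    using e by (auto simp: simple_idempotent_def fixed_points_def)
  moreover have "(\<Sum>q\<in>A. l q * e * c q) = e * (\<Sum>q\<in>A. l q * c q)"
    by (simp add: sum_distrib_left algebra_simps)
  ultimately have "linear_relation e A c (\<lambda>q. l q * e)"
    using lc relation by (simp add: linear_relation_def subring_mult[OF subring_L] mult.assoc)
  then show ?thesis
    using linear_relation_in_tensor_rel[OF e \<open>finite A\<close>] lc by simp
qed

lemma tensor_mult_injective_if_simple_idempotents: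
  assumes "finite P" and sum_e: "(\<Sum>p\<in>P. e p) = 1"
    and e: "\<And>p. p \<in> P \<Longrightarrow> simple_idempotent act S L (e p)"
  shows "tensor_mult_injective L K C"
  unfolding tensor_mult_injective_def
proof (intro ballI impI)
  fix x assume x: "x \<in> tensor_reps L C" and "mult_map x = 0"
  define A where "A = Poly_Mapping.keys x"
  define l where "l q = of_int (Poly_Mapping.lookup x q) * fst q" for q
  have lc: "l q \<in> L \<and> snd q \<in> C" if "q \<in> A" for q
    using x that subring_of_int[OF subring_L] subring_mult[OF subring_L]
    by (auto simp: A_def l_def tensor_reps_def)
  have "(\<Sum>q\<in>A. l q * snd q) = 0"
    using \<open>mult_map x = 0\<close> by (simp add: mult_map_def A_def l_def mult.assoc)
  have "x = (x - (\<Sum>q\<in>A. frag_of (l q, snd q))) +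
     (\<Sum>q\<in>A. frag_of (\<Sum>p\<in>P. l q * e p, snd q) - (\<Sum>p\<in>P. frag_of (l q * e p, snd q))) +
     (\<Sum>p\<in>P. \<Sum>q\<in>A. frag_of (l q * e p, snd q))"
    by (simp add: sum_subtractf sum.swap[of _ P A] sum_e flip: sum_distrib_left)
  also have "\<dots> \<in> tensor_rel L K C"
  proof (intro tensor_rel.add)
    show "x - (\<Sum>q\<in>A. frag_of (l q, snd q)) \<in> tensor_rel L K C"
      using tensor_rel_normal_form[OF subring_L x] by (simp add: A_def l_def)
    show "(\<Sum>q\<in>A. frag_of (\<Sum>p\<in>P. l q * e p, snd q) - (\<Sum>p\<in>P. frag_of (l q * e p, snd q)))
        \<in> tensor_rel L K C"
      using lc e
      by (intro tensor_rel_sum tensor_rel_sum_left[OF subring_L] subring_mult[OF subring_L])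
        (auto simp: simple_idempotent_def fixed_points_def)
    show "(\<Sum>p\<in>P. \<Sum>q\<in>A. frag_of (l q * e p, snd q)) \<in> tensor_rel L K C"
      using e lc \<open>(\<Sum>q\<in>A. l q * snd q) = 0\<close>
      by (intro tensor_rel_sum relation_component_in_tensor_rel) (auto simp: A_def)
  qed
  finally show "x \<in> tensor_rel L K C" .
qed

end

theorem corollary1:
  fixes act :: "int \<times> 'g::{finite, ab_group_add} \<Rightarrow> 'b::comm_ring_1 \<Rightarrow> 'b"
    and L C :: "'b set"
  assumes "ring_action act"
    and "pseudofield act UNIV L"
    and "Sigma1_closed act (invariants act L)"
    and "is_subring C" and "C \<subseteq> invariants act UNIV" and "stable act Sigma1 C"
    and "invariants act L \<subseteq> C"
  shows "tensor_mult_injective L (invariants act L) C"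
proof -
  have invariants: "invariants act X = fixed_points act Sigma0 X" for X
    using invariants_eq_fixed_points_Sigma0[OF assms(1)] .
  interpret Sigma_simple_ring where act = act and L = L
    using assms(1,2) by unfold_locales (auto simp: pseudofield_def)
  obtain P :: "'b set set" and e where "finite P" "(\<Sum>p\<in>P. e p) = 1"
    "\<And>p. p \<in> P \<Longrightarrow> simple_idempotent act Sigma0 L (e p)"
    using simple_idempotent_decomposition by metis
  interpret constant_subring where act = act and S = Sigma0 and L = L and C = C
    using assms(4,5,7) subring stable by unfold_locales (auto simp: invariants stable_def)
  show ?thesis
    unfolding invariants by (rule tensor_mult_injective_if_simple_idempotents) fact+
qed

end
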